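(* Let a positive, anchored hidden Markov model with multiple observation processes be given, together with a (measurable) policy $g:\mathcal P(S)\to O$. Suppose the restricted information chain $F|_R$ is irreducible and aperiodic. Then the information state $Z_t$ converges in distribution (for any initial law of $Z_0$) to some discrete invariant measure $\mu_\infty\in\mathcal P(R)\subset\mathcal P(\mathcal P(S))$.
   Context: Model: $(X_t)_{t\ge0}$ is a time-homogeneous Markov chain on the finite state space $S=\{1,\dots,n\}$ with transition matrix $T$, $T_{ij}=\mathbb P(X_{t+1}=j\mid X_t=i)$. $O$ is a finite index set; for each $i\in O$, $(Y^{(i)}_t)$ is an observation process with values in $V=\{1,\dots,m\}$ and observation matrix $M^{(i)}$ ($n\times m$), $M^{(i)}_{jk}=\mathbb P(Y^{(i)}_t=k\mid X_t=j)$; observations depend only on the current state (conditionally independent of past states and observations given $X_t$), and $X_{t+1}$ is conditionally independent of the past states and all observations up to time $t$ given $X_t$. $\mathcal P(S)=\{z\in\mathbb R^n: z_j\ge0,\ \sum_j z_j=1\}$, $\delta(x)\in\mathcal P(S)$ is the point mass at $x$, and $\mathcal P(\mathcal P(S))$ is the set of Radon probability measures on $\mathcal P(S)$. A policy is a function $g:\mathcal P(S)\to O$; $A_i=g^{-1}\{i\}$. The observation index is $I_0$ fixed and $I_{t+1}=g(Z_t)$, the actual observation is $Y_t=Y^{(I_t)}_t$, and the information state is $Z_t=\mathbb P(X_t\mid Y_0,\dots,Y_t,I_0,\dots,I_t)\in\mathcal P(S)$ (posterior distribution). For $i\in O$, $y\in V$, $z\in\mathcal P(S)$ define $\alpha_{i,y}(z)=(z\,T\,M^{(i)})_y=\sum_{j,x}z_jT_{j,x}M^{(i)}_{x,y}$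 and, when $\alpha_{i,y}(z)>0$, $r_{i,y}(z)=\frac{\sum_{x,j}M^{(i)}_{x,y}T_{j,x}z_j\,\delta(x)}{\sum_{x,j}M^{(i)}_{x,y}T_{j,x}z_j}\in\mathcal P(S)$. The transition function is $F(\mu)=\sum_{i\in O}\sum_{y\in V}\int_{A_i}\alpha_{i,y}(z)\,\delta_{r_{i,y}(z)}\,d\mu(z)$ (terms with $\alpha_{i,y}(z)=0$ contribute zero); the law $\mu_t$ of $Z_t$ satisfies $\mu_{t+1}=F(\mu_t)$. The model is positive if all entries of $T$ are strictly positive. It is anchored if $(X_t)$ is ergodic (irreducible, aperiodic, positive recurrent) and for each $i\in O$ there are $x_i\in S$, $y_i\in V$ with $M^{(i)}_{x_i,y_i}>0$ and $M^{(i)}_{x,y_i}=0$ for all $x\ne x_i$. For $x\in S$, the orbit $R_x$ is the set consisting of $\delta(x)$ and all points $r_{i_k,y_k}\circ\cdots\circ r_{i_1,y_1}(\delta(x))$ ($k\ge1$, $i_j\in O$, $y_j\in V$) such that every $\alpha$-value along the way is positive, i.e. $\alpha_{i_{j+1},y_{j+1}}(r_{i_j,y_j}\circ\cdots\circ r_{i_1,y_1}(\delta(x)))>0$ for $j=0,\dots,k-1$. Let $R=\bigcup_{x\in S}R_x$ (a countable set). The restricted information chain $F|_R$ is the Markov chain on $R$ which from $z$ moves to $r_{g(z),y}(z)$ with probability $\alpha_{g(z),y}(z)$, $y\in V$. *)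

theory Defs
  imports "HOL-Probability.Probability"
begin

text \<open>State space S is a finite type 'x, observation values V a finite type 'v,
  observation-process indices O a finite type 'o.
  T x x' = P(X_{t+1} = x' | X_t = x); M i x y = P(Y^(i)_t = y | X_t = x).
  Information states are vectors z :: real^'x.\<close>

definition stochastic_model :: "('x::finite \<Rightarrow> 'x \<Rightarrow> real) \<Rightarrow> ('o::finite \<Rightarrow> 'x \<Rightarrow> 'v::finite \<Rightarrow> real) \<Rightarrow> bool" where
  "stochastic_model T M \<longleftrightarrow>
     (\<forall>i j. 0 \<le> T i j) \<and> (\<forall>i. (\<Sum>j\<in>UNIV. T i j) = 1) \<and>
     (\<forall>i x y. 0 \<le> M i x y) \<and> (\<forall>i x. (\<Sum>y\<in>UNIV. M i x y) = 1)"

fun matpow :: "('x::finite \<Rightarrow> 'x \<Rightarrow> real) \<Rightarrow> nat \<Rightarrow> 'x \<Rightarrow> 'x \<Rightarrow> real" where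
  "matpow T 0 = (\<lambda>i j. if i = j then 1 else 0)"
| "matpow T (Suc k) = (\<lambda>i j. \<Sum>l\<in>UNIV. T i l * matpow T k l j)"

definition positive_model :: "('x::finite \<Rightarrow> 'x \<Rightarrow> real) \<Rightarrow> bool" where
  "positive_model T \<longleftrightarrow> (\<forall>i j. 0 < T i j)"

text \<open>Ergodic finite chain: irreducible and aperiodic (positive recurrence is automatic).\<close>
definition ergodic_chain :: "('x::finite \<Rightarrow> 'x \<Rightarrow> real) \<Rightarrow> bool" where
  "ergodic_chain T \<longleftrightarrow>
     (\<forall>i j. \<exists>k. 0 < matpow T k i j) \<and>
     (\<forall>i. Gcd {k. 0 < k \<and> 0 < matpow T k i i} = 1)"

definition anchored_model :: "('x::finite \<Rightarrow> 'x \<Rightarrow> real) \<Rightarrow> ('o::finite \<Rightarrow> 'x \<Rightarrow> 'v::finite \<Rightarrow> real) \<Rightarrow> bool" where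
  "anchored_model T M \<longleftrightarrow> ergodic_chain T \<and>
     (\<forall>i. \<exists>xi yi. 0 < M i xi yi \<and> (\<forall>x. x \<noteq> xi \<longrightarrow> M i x yi = 0))"

definition PS :: "(real^'x::finite) set" where
  "PS = {z. (\<forall>j. 0 \<le> z $ j) \<and> (\<Sum>j\<in>UNIV. z $ j) = 1}"

definition PSM :: "(real^'x::finite) measure" where
  "PSM = restrict_space borel PS"

definition delta :: "'x::finite \<Rightarrow> real^'x" where
  "delta x = (\<chi> j. if j = x then 1 else 0)"

definition alpha :: "('x::finite \<Rightarrow> 'x \<Rightarrow> real) \<Rightarrow> ('o::finite \<Rightarrow> 'x \<Rightarrow> 'v::finite \<Rightarrow> real)
    \<Rightarrow> 'o \<Rightarrow> 'v \<Rightarrow> real^'x \<Rightarrow> real" where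
  "alpha T M i y z = (\<Sum>j\<in>UNIV. \<Sum>x\<in>UNIV. z $ j * T j x * M i x y)"

definition rmap :: "('x::finite \<Rightarrow> 'x \<Rightarrow> real) \<Rightarrow> ('o::finite \<Rightarrow> 'x \<Rightarrow> 'v::finite \<Rightarrow> real)
    \<Rightarrow> 'o \<Rightarrow> 'v \<Rightarrow> real^'x \<Rightarrow> real^'x" where
  "rmap T M i y z = (1 / alpha T M i y z) *\<^sub>R (\<Sum>x\<in>UNIV. (\<Sum>j\<in>UNIV. M i x y * T j x * z $ j) *\<^sub>R delta x)"

definition Ftrans :: "('x::finite \<Rightarrow> 'x \<Rightarrow> real) \<Rightarrow> ('o::finite \<Rightarrow> 'x \<Rightarrow> 'v::finite \<Rightarrow> real)
    \<Rightarrow> (real^'x \<Rightarrow> 'o) \<Rightarrow> (real^'x) measure \<Rightarrow> (real^'x) measure" where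
  "Ftrans T M g \<mu> = measure_of PS (sets PSM)
     (\<lambda>B. \<Sum>i\<in>UNIV. \<Sum>y\<in>UNIV.
        set_nn_integral \<mu> (g -` {i} \<inter> PS)
          (\<lambda>z. ennreal (alpha T M i y z) * indicator B (rmap T M i y z)))"

inductive_set orbit :: "('x::finite \<Rightarrow> 'x \<Rightarrow> real) \<Rightarrow> ('o::finite \<Rightarrow> 'x \<Rightarrow> 'v::finite \<Rightarrow> real)
    \<Rightarrow> 'x \<Rightarrow> (real^'x) set" for T M x where
  base: "delta x \<in> orbit T M x"
| step: "z \<in> orbit T M x \<Longrightarrow> 0 < alpha T M i y z \<Longrightarrow> rmap T M i y z \<in> orbit T M x"

definition Rset :: "('x::finite \<Rightarrow> 'x \<Rightarrow> real) \<Rightarrow> ('o::finite \<Rightarrow> 'x \<Rightarrow> 'v::finite \<Rightarrow> real) \<Rightarrow> (real^'x) set" where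
  "Rset T M = (\<Union>x\<in>UNIV. orbit T M x)"

text \<open>k-step transition probabilities of the restricted information chain F|_R:
  from z it moves to r_{g(z),y}(z) with probability alpha_{g(z),y}(z).\<close>
fun rpow :: "('x::finite \<Rightarrow> 'x \<Rightarrow> real) \<Rightarrow> ('o::finite \<Rightarrow> 'x \<Rightarrow> 'v::finite \<Rightarrow> real)
    \<Rightarrow> (real^'x \<Rightarrow> 'o) \<Rightarrow> nat \<Rightarrow> real^'x \<Rightarrow> real^'x \<Rightarrow> real" where
  "rpow T M g 0 z w = (if z = w then 1 else 0)"
| "rpow T M g (Suc k) z w =
     (\<Sum>y\<in>{y. 0 < alpha T M (g z) y z}. alpha T M (g z) y z * rpow T M g k (rmap T M (g z) y z) w)"

definition restricted_irreducible :: "('x::finite \<Rightarrow> 'x \<Rightarrow> real) \<Rightarrow> ('o::finite \<Rightarrow> 'x \<Rightarrow> 'v::finite \<Rightarrow> real)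
    \<Rightarrow> (real^'x \<Rightarrow> 'o) \<Rightarrow> bool" where
  "restricted_irreducible T M g \<longleftrightarrow>
     (\<forall>z\<in>Rset T M. \<forall>w\<in>Rset T M. \<exists>k. 0 < rpow T M g k z w)"

definition restricted_aperiodic :: "('x::finite \<Rightarrow> 'x \<Rightarrow> real) \<Rightarrow> ('o::finite \<Rightarrow> 'x \<Rightarrow> 'v::finite \<Rightarrow> real)
    \<Rightarrow> (real^'x \<Rightarrow> 'o) \<Rightarrow> bool" where
  "restricted_aperiodic T M g \<longleftrightarrow>
     (\<forall>z\<in>Rset T M. Gcd {k. 0 < k \<and> 0 < rpow T M g k z z} = 1)"

definition prob_on_PS :: "(real^'x::finite) measure \<Rightarrow> bool" where
  "prob_on_PS \<mu> \<longleftrightarrow> sets \<mu> = sets PSM \<and> prob_space \<mu>"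

definition weak_conv_PS :: "(nat \<Rightarrow> (real^'x::finite) measure) \<Rightarrow> (real^'x) measure \<Rightarrow> bool" where
  "weak_conv_PS \<mu>s \<mu> \<longleftrightarrow>
     (\<forall>f :: real^'x \<Rightarrow> real. continuous_on PS f \<longrightarrow>
        (\<lambda>t. \<integral>z. f z \<partial>(\<mu>s t)) \<longlonglongrightarrow> (\<integral>z. f z \<partial>\<mu>))"

end

theory Submission
  imports Defs
begin

text \<open>Positivity of T and the anchor observations give Doeblin's condition for the information
  chain: whatever the current information state, with probability bounded below the next
  observation is an anchor and resets the state to a point mass, from which irreducibility and
  aperiodicity of the restricted chain lead to a fixed reference state in a fixed number K of
  steps. Hence K steps of the Markov operator P of the chain shrink the range of every bounded
  function by the factor 1 - eps, and the iterates P^t h converge uniformly on P(S) to a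
  constant, the asymptotic mean of h. This mean is a positive normalised linear functional; its
  values at the points of R form a probability mass function (the finite sets reachable from
  the reference state in j K steps carry mass at least 1 - 2 (1 - eps)^j), and it is the
  integral against this distribution. Since the integral of f against F^t(mu) is the integral
  of P^t f against mu, dominated convergence gives weak convergence to this distribution, which
  is invariant because the asymptotic mean is.\<close>

lemma nat_add_closed_mult_mem:
  fixes S :: "nat set"
  assumes add: "\<And>a b. a \<in> S \<Longrightarrow> b \<in> S \<Longrightarrow> a + b \<in> S" and "a \<in> S" and "0 < k"
  shows "k * a \<in> S"
  using \<open>0 < k\<close>
proof (induction k rule: nat_induct_non_zero)
  case (Suc n)
  then show ?case using add[OF \<open>a \<in> S\<close> Suc.IH] by simp
qed (simp add: \<open>a \<in> S\<close>)

lemma nat_add_closed_consecutive_mem: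
  fixes S :: "nat set"
  assumes add: "\<And>a b. a \<in> S \<Longrightarrow> b \<in> S \<Longrightarrow> a + b \<in> S" and gcd: "Gcd S = 1" and "0 \<notin> S"
  obtains s where "s \<in> S" "Suc s \<in> S"
proof -
  define D where "D = {d. 0 < d \<and> (\<exists>s\<in>S. s + d \<in> S)}"
  have "S \<noteq> {}" using gcd by auto
  then obtain s0 where "s0 \<in> S" by blast
  then have "s0 \<in> D"
    using add[of s0 s0] \<open>0 \<notin> S\<close> unfolding D_def by (cases s0) (auto intro!: bexI[of _ s0])
  define d where "d = (LEAST d. d \<in> D)"
  have "d \<in> D" unfolding d_def using \<open>s0 \<in> D\<close> by (rule LeastI)
  then obtain s where s: "s \<in> S" "s + d \<in> S" and "0 < d" unfolding D_def by auto
  have "d = 1"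
  proof (rule ccontr)
    assume "d \<noteq> 1"
    have "\<exists>u\<in>S. \<not> d dvd u"
    proof (rule ccontr)
      assume "\<not> (\<exists>u\<in>S. \<not> d dvd u)"
      then have "d dvd Gcd S" by (auto intro: Gcd_greatest)
      with gcd \<open>d \<noteq> 1\<close> show False by simp
    qed
    then obtain u where u: "u \<in> S" "\<not> d dvd u" by blast
    define q r where "q = u div d" and "r = u mod d"
    have r: "0 < r" "r < d" using u \<open>0 < d\<close> by (auto simp: r_def dvd_eq_mod_eq_0)
    have u_eq: "u = q * d + r" by (simp add: q_def r_def)
    \<comment> \<open>the gap between two elements of S shrinks from d to d - r\<close>
    have "Suc q * s \<in> S" using nat_add_closed_mult_mem[OF add s(1), of "Suc q"] by simp
    then have start: "Suc q * s + u \<in> S" using add u(1) by blast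
    have "(Suc q * s + u) + (d - r) = Suc q * (s + d)" using u_eq r by (simp add: algebra_simps)
    moreover have "Suc q * (s + d) \<in> S" using nat_add_closed_mult_mem[OF add s(2), of "Suc q"] by simp
    ultimately have step: "(Suc q * s + u) + (d - r) \<in> S" by (simp only:)
    have "0 < d - r" using r by simp
    then have "d - r \<in> D" unfolding D_def using start step by blast
    then have "d \<le> d - r" unfolding d_def by (rule Least_le)
    then show False using r by simp
  qed
  then show thesis using that s by simp
qed

lemma nat_add_closed_eventually_mem:
  fixes S :: "nat set"
  assumes add: "\<And>a b. a \<in> S \<Longrightarrow> b \<in> S \<Longrightarrow> a + b \<in> S" and "Gcd S = 1" and "0 \<notin> S"
  shows "eventually (\<lambda>n. n \<in> S) sequentially"
proof -
  obtain s where s: "s \<in> S" "Suc s \<in> S" using nat_add_closed_consecutive_mem[OF assms] .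
  have "0 < s" using s \<open>0 \<notin> S\<close> by (cases s) auto
  have "n \<in> S" if "s * s \<le> n" for n
  proof -
    define q r where "q = n div s" and "r = n mod s"
    have "r < s" using \<open>0 < s\<close> by (simp add: r_def)
    moreover have "s \<le> q" using that \<open>0 < s\<close> unfolding q_def by (simp add: less_eq_div_iff_mult_less_eq)
    ultimately obtain k where "q = r + k" by (metis le_iff_add less_or_eq_imp_le order_trans)
    moreover have "n = q * s + r" by (simp add: q_def r_def)
    ultimately have n_eq: "n = k * s + r * Suc s" by (simp add: algebra_simps)
    have ks: "k * s \<in> S" using nat_add_closed_mult_mem[OF add s(1), of k] \<open>q = r + k\<close> \<open>r < s\<close> \<open>s \<le> q\<close> by simp
    show "n \<in> S"
    proof (cases "r = 0")
      case True
      then show ?thesis using ks n_eq by simp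
    next
      case False
      then have "r * Suc s \<in> S" using nat_add_closed_mult_mem[OF add s(2)] by simp
      then show ?thesis using add[OF ks] n_eq by simp
    qed
  qed
  then show ?thesis unfolding eventually_sequentially by blast
qed

lemma bounded_indicator_image: "bounded ((indicator S :: 'a \<Rightarrow> real) ` A)"
  unfolding bounded_real by (intro exI[of _ 1]) (simp add: indicator_def)

lemma bounded_const_image: "bounded ((\<lambda>_. c :: real) ` A)"
  unfolding bounded_real by (intro exI[of _ "\<bar>c\<bar>"]) simp

lemma bounded_image_lincomb:
  fixes f g :: "'a \<Rightarrow> real"
  assumes "bounded (f ` A)" "bounded (g ` A)"
  shows "bounded ((\<lambda>x. a * f x + b * g x) ` A)"
  using bounded_plus_comp[OF bounded_scaleR_comp[OF assms(1)] bounded_scaleR_comp[OF assms(2)]]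
  by simp

locale linear_functional_on =
  fixes A :: "'a set" and L :: "('a \<Rightarrow> real) \<Rightarrow> real"
  assumes lincomb: "bounded (f ` A) \<Longrightarrow> bounded (g ` A) \<Longrightarrow>
    L (\<lambda>x. a * f x + b * g x) = a * L f + b * L g"
begin

lemma L_sum:
  assumes "finite F" and "\<And>i. i \<in> F \<Longrightarrow> bounded (f i ` A)"
  shows "L (\<lambda>x. \<Sum>i\<in>F. f i x) = (\<Sum>i\<in>F. L (f i))"
proof -
  have "bounded ((\<lambda>x. \<Sum>i\<in>F. f i x) ` A) \<and> L (\<lambda>x. \<Sum>i\<in>F. f i x) = (\<Sum>i\<in>F. L (f i))"
    using assms
  proof (induction F rule: finite_induct)
    case empty
    show ?case using lincomb[OF bounded_const_image bounded_const_image, of 0 0 0 0] bounded_const_image[of 0]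
      by simp
  next
    case (insert i F)
    then show ?case
      using lincomb[of "f i" "\<lambda>x. \<Sum>i\<in>F. f i x" 1 1]
        bounded_image_lincomb[of "f i" A "\<lambda>x. \<Sum>i\<in>F. f i x" 1 1] by simp
  qed
  then show ?thesis ..
qed

lemma L_restrict_finite:
  assumes "finite F"
  shows "L (\<lambda>x. h x * indicator F x) = (\<Sum>w\<in>F. h w * L (indicator {w}))"
proof -
  have fun_eq: "(\<lambda>x. h x * indicator F x) = (\<lambda>x. \<Sum>w\<in>F. h w * indicator {w} x)"
    using assms by (auto simp: indicator_def if_distrib cong: if_cong)
  have "L (\<lambda>x. h x * indicator F x) = (\<Sum>w\<in>F. L (\<lambda>x. h w * indicator {w} x))"
    unfolding fun_eq
  proof (rule L_sum[OF assms])
    show "bounded ((\<lambda>x. h w * indicator {w} x) ` A)" for w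
      unfolding bounded_real by (intro exI[of _ "\<bar>h w\<bar>"]) (simp add: indicator_def)
  qed
  also have "\<dots> = (\<Sum>w\<in>F. h w * L (indicator {w}))"
    using lincomb[OF bounded_indicator_image bounded_indicator_image, where b=0] by simp
  finally show ?thesis .
qed

end

locale positive_linear_functional_on = linear_functional_on +
  assumes mono: "bounded (f ` A) \<Longrightarrow> bounded (g ` A) \<Longrightarrow> (\<And>x. x \<in> A \<Longrightarrow> f x \<le> g x) \<Longrightarrow> L f \<le> L g"
begin

lemma abs_L_le:
  assumes "bounded (f ` A)" "bounded (u ` A)" and "\<And>x. x \<in> A \<Longrightarrow> \<bar>f x\<bar> \<le> u x"
  shows "\<bar>L f\<bar> \<le> L u"
proof -
  have "L (\<lambda>x. (- 1) * u x + 0 * u x) \<le> L f"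
    using assms bounded_image_lincomb[OF assms(2,2)] by (intro mono) (force simp: abs_le_iff)+
  moreover have "L (\<lambda>x. (- 1) * u x + 0 * u x) = - L u" using lincomb[OF assms(2,2), of "- 1" 0] by simp
  moreover have "L f \<le> L u" using assms by (intro mono) (auto simp: abs_le_iff)
  ultimately show ?thesis by (simp add: abs_le_iff)
qed

lemma L_finite_approx:
  assumes "finite F" and h: "\<And>x. x \<in> A \<Longrightarrow> \<bar>h x\<bar> \<le> B"
  shows "\<bar>L h - (\<Sum>w\<in>F. h w * L (indicator {w}))\<bar> \<le> B * (L (\<lambda>_. 1) - L (indicator F))"
proof -
  define rest :: "'a \<Rightarrow> real" where "rest x = 1 - indicator F x" for x
  have bdd: "bounded (f ` A)" if "\<And>x. x \<in> A \<Longrightarrow> \<bar>f x\<bar> \<le> c" for f :: "'a \<Rightarrow> real" and c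
    using that unfolding bounded_real by blast
  have h_abs: "\<bar>h x\<bar> \<le> \<bar>B\<bar>" if "x \<in> A" for x using h[OF that] by simp
  have bdd_rest: "bounded (rest ` A)" by (rule bdd[of _ 1]) (simp add: rest_def indicator_def)
  have bdd_in: "bounded ((\<lambda>x. h x * indicator F x) ` A)"
    by (rule bdd[of _ "\<bar>B\<bar>"]) (auto simp: indicator_def h_abs)
  have bdd_out: "bounded ((\<lambda>x. h x * rest x) ` A)"
    by (rule bdd[of _ "\<bar>B\<bar>"]) (auto simp: rest_def indicator_def h_abs)
  have "L h = L (\<lambda>x. 1 * (h x * indicator F x) + 1 * (h x * rest x))"
    by (simp add: rest_def algebra_simps)
  also have "\<dots> = L (\<lambda>x. h x * indicator F x) + L (\<lambda>x. h x * rest x)"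
    using lincomb[OF bdd_in bdd_out, of 1 1] by (simp only: mult_1)
  finally have "L h - (\<Sum>w\<in>F. h w * L (indicator {w})) = L (\<lambda>x. h x * rest x)"
    using L_restrict_finite[OF assms(1), of h] by linarith
  moreover have "\<bar>L (\<lambda>x. h x * rest x)\<bar> \<le> L (\<lambda>x. B * rest x + 0 * rest x)"
  proof (rule abs_L_le[OF bdd_out bounded_image_lincomb[OF bdd_rest bdd_rest]])
    show "\<bar>h x * rest x\<bar> \<le> B * rest x + 0 * rest x" if "x \<in> A" for x
      using h[OF that] by (simp add: rest_def indicator_def abs_mult)
  qed
  moreover have "L (\<lambda>x. B * rest x + 0 * rest x) = B * (L (\<lambda>_. 1) - L (indicator F))"
  proof -
    have "L rest = L (\<lambda>x. 1 * 1 + (- 1) * indicator F x)" by (simp add: rest_def[abs_def])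
    then have "L rest = L (\<lambda>_. 1) - L (indicator F)"
      using lincomb[OF bounded_const_image[of 1] bounded_indicator_image[of F], of 1 "-1"] by simp
    then show ?thesis using lincomb[OF bdd_rest bdd_rest, of B 0] by simp
  qed
  ultimately show ?thesis by simp
qed

end

lemma nn_integral_count_space_eq_1:
  fixes p :: "'a \<Rightarrow> real"
  assumes nonneg: "\<And>x. 0 \<le> p x" and le: "\<And>F. finite F \<Longrightarrow> sum p F \<le> 1"
    and approx: "\<And>e. 0 < e \<Longrightarrow> \<exists>F. finite F \<and> 1 - e \<le> sum p F"
  shows "(\<integral>\<^sup>+x. ennreal (p x) \<partial>count_space UNIV) = 1"
proof -
  have summable: "Infinite_Set_Sum.abs_summable_on p UNIV"
    by (rule abs_summable_finite_sumsI[where B=1]) (simp add: nonneg le)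
  have SUP_eq: "ennreal (infsetsum p UNIV) = (SUP F\<in>{F. finite F \<and> F \<subseteq> UNIV}. ennreal (sum p F))"
    by (rule infsetsum_nonneg_is_SUPREMUM_ennreal[OF summable]) (simp add: nonneg)
  have "ennreal (infsetsum p UNIV) \<le> 1" unfolding SUP_eq by (rule SUP_least) (simp add: le)
  then have upper: "infsetsum p UNIV \<le> 1" by simp
  have lower: "1 - e \<le> infsetsum p UNIV" if e: "0 < e" for e
  proof -
    obtain F where "finite F" "1 - e \<le> sum p F" using approx[OF e] by blast
    moreover have "ennreal (sum p F) \<le> ennreal (infsetsum p UNIV)"
      unfolding SUP_eq using \<open>finite F\<close> by (intro SUP_upper) auto
    ultimately show ?thesis by (simp add: infsetsum_nonneg nonneg)
  qed
  have "1 \<le> infsetsum p UNIV"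
  proof (rule field_le_epsilon)
    show "1 \<le> infsetsum p UNIV + e" if "0 < e" for e using lower[OF that] by linarith
  qed
  with upper have "infsetsum p UNIV = 1" by simp
  then show ?thesis using nn_integral_conv_infsetsum[OF summable] nonneg by simp
qed

lemma integral_eq_nn_integral_shift:
  fixes h :: "'a \<Rightarrow> real"
  assumes "prob_space N" and "h \<in> borel_measurable N" and B: "\<And>z. z \<in> space N \<Longrightarrow> \<bar>h z\<bar> \<le> B"
  shows "(\<integral>z. h z \<partial>N) = enn2real (\<integral>\<^sup>+z. ennreal (h z + B) \<partial>N) - B"
proof -
  interpret prob_space N by fact
  have "integrable N h" by (rule integrable_const_bound[where B=B]) (use B assms(2) in auto)
  then have "(\<integral>z. h z + B \<partial>N) = (\<integral>z. h z \<partial>N) + B" by (simp add: prob_space)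
  moreover have "(\<integral>z. h z + B \<partial>N) = enn2real (\<integral>\<^sup>+z. ennreal (h z + B) \<partial>N)"
  proof (rule integral_eq_nn_integral)
    show "AE z in N. 0 \<le> h z + B" by (intro AE_I2) (use B in \<open>fastforce simp: abs_le_iff\<close>)
  qed (use assms(2) in simp)
  ultimately show ?thesis by simp
qed

lemma delta_in_PS: "delta x \<in> PS"
  by (simp add: PS_def delta_def)

lemma nth_sum_scaleR_delta: "(\<Sum>x\<in>UNIV. c x *\<^sub>R delta x) $ k = (c k :: real)"
  by (simp add: delta_def if_distrib cong: if_cong)

lemma compact_PS: "compact (PS :: (real^'x::finite) set)"
proof -
  have "PS = (\<Inter>j. {z::real^'x. 0 \<le> z $ j}) \<inter> {z. (\<Sum>j\<in>UNIV. z $ j) = 1}"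
    by (auto simp: PS_def)
  also have "closed \<dots>"
    by (intro closed_Int closed_INT ballI closed_Collect_le closed_Collect_eq continuous_intros)
  finally have "closed (PS :: (real^'x) set)" .
  moreover have "PS \<subseteq> cbox (0::real^'x) (\<chi> j. 1)"
  proof
    fix z :: "real^'x" assume z: "z \<in> PS"
    have "z $ j \<le> 1" for j
      using z member_le_sum[of j UNIV "\<lambda>k. z $ k"] by (simp add: PS_def)
    then show "z \<in> cbox 0 (\<chi> j. 1)" using z by (simp add: mem_box_cart PS_def)
  qed
  ultimately show ?thesis by (metis bounded_cbox bounded_subset compact_eq_bounded_closed)
qed

lemma PS_in_sets_borel[measurable]: "PS \<in> sets (borel :: (real^'x::finite) measure)"
  unfolding PS_def by measurable

lemma space_PSM[simp]: "space PSM = PS"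
  by (simp add: PSM_def space_restrict_space)

lemma sets_PSM_iff: "A \<in> sets PSM \<longleftrightarrow> A \<subseteq> PS \<and> A \<in> sets borel"
  unfolding PSM_def by (rule sets_restrict_space_iff) simp

lemma alpha_borel_measurable: "alpha T M i y \<in> borel_measurable borel"
  unfolding alpha_def by measurable

lemma alpha_measurable[measurable]: "alpha T M i y \<in> borel_measurable PSM"
  unfolding PSM_def by (intro measurable_restrict_space1 alpha_borel_measurable)

lemma rmap_measurable: "rmap T M i y \<in> borel_measurable PSM"
  unfolding PSM_def rmap_def
  by (intro measurable_restrict_space1 borel_measurable_scaleR borel_measurable_divide
      borel_measurable_const alpha_borel_measurable borel_measurable_continuous_onI continuous_intros)

lemma orbit_eq_foldr_rmap:
  "z \<in> orbit T M x \<Longrightarrow> \<exists>l. z = foldr (\<lambda>(i, y). rmap T M i y) l (delta x)"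
proof (induction rule: orbit.induct)
  case base
  show ?case by (rule exI[of _ "[]"]) simp
next
  case (step z i y)
  then obtain l where "z = foldr (\<lambda>(i, y). rmap T M i y) l (delta x)" by blast
  then show ?case by (intro exI[of _ "(i, y) # l"]) simp
qed

lemma countable_Rset: "countable (Rset T M)"
proof (rule countable_subset)
  show "Rset T M \<subseteq> (\<Union>x. range (\<lambda>l. foldr (\<lambda>(i, y). rmap T M i y) l (delta x)))"
  proof
    fix z assume "z \<in> Rset T M"
    then obtain x where "z \<in> orbit T M x" unfolding Rset_def by blast
    then obtain l where "z = foldr (\<lambda>(i, y). rmap T M i y) l (delta x)"
      using orbit_eq_foldr_rmap by blast
    then show "z \<in> (\<Union>x. range (\<lambda>l. foldr (\<lambda>(i, y). rmap T M i y) l (delta x)))" by blast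
  qed
qed auto

locale stochastic_hmm =
  fixes T :: "'x::finite \<Rightarrow> 'x \<Rightarrow> real"
    and M :: "'o::finite \<Rightarrow> 'x \<Rightarrow> 'v::finite \<Rightarrow> real"
  assumes stochastic: "stochastic_model T M"
begin

lemma T_nonneg: "0 \<le> T i j" and T_row_sum: "(\<Sum>j\<in>UNIV. T i j) = 1"
  and M_nonneg: "0 \<le> M a x y" and M_row_sum: "(\<Sum>y\<in>UNIV. M a x y) = 1"
  using stochastic by (auto simp: stochastic_model_def)

lemma alpha_nonneg: "z \<in> PS \<Longrightarrow> 0 \<le> alpha T M i y z"
  unfolding alpha_def PS_def by (intro sum_nonneg mult_nonneg_nonneg) (auto simp: T_nonneg M_nonneg)

lemma sum_alpha: assumes "z \<in> PS" shows "(\<Sum>y\<in>UNIV. alpha T M i y z) = 1"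
proof -
  have "(\<Sum>y\<in>UNIV. alpha T M i y z) = (\<Sum>j\<in>UNIV. \<Sum>y\<in>UNIV. \<Sum>x\<in>UNIV. z $ j * T j x * M i x y)"
    unfolding alpha_def by (rule sum.swap)
  also have "\<dots> = (\<Sum>j\<in>UNIV. \<Sum>x\<in>UNIV. \<Sum>y\<in>UNIV. z $ j * T j x * M i x y)"
    by (intro sum.cong refl) (rule sum.swap)
  also have "\<dots> = (\<Sum>j\<in>UNIV. z $ j * (\<Sum>x\<in>UNIV. T j x))"
    by (simp add: M_row_sum flip: sum_distrib_left)
  also have "\<dots> = 1" using assms by (simp add: T_row_sum PS_def)
  finally show ?thesis .
qed

lemma nth_rmap: "rmap T M i y z $ k = (\<Sum>j\<in>UNIV. M i k y * T j k * z $ j) / alpha T M i y z"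
  unfolding rmap_def vector_scaleR_component nth_sum_scaleR_delta by simp

lemma rmap_in_PS: assumes "z \<in> PS" "0 < alpha T M i y z" shows "rmap T M i y z \<in> PS"
proof -
  have "(\<Sum>k\<in>UNIV. \<Sum>j\<in>UNIV. M i k y * T j k * z $ j) = alpha T M i y z"
    unfolding alpha_def by (subst sum.swap) (simp add: algebra_simps)
  then have "(\<Sum>k\<in>UNIV. rmap T M i y z $ k) = 1"
    using assms(2) by (simp add: nth_rmap flip: sum_divide_distrib)
  moreover have "0 \<le> rmap T M i y z $ k" for k
    unfolding nth_rmap using assms
    by (intro divide_nonneg_pos sum_nonneg mult_nonneg_nonneg) (auto simp: PS_def T_nonneg M_nonneg)
  ultimately show ?thesis by (simp add: PS_def)
qed

lemma Rset_subset_PS: "Rset T M \<subseteq> PS"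
proof -
  have "z \<in> PS" if "z \<in> orbit T M x" for z x
    using that by induction (auto simp: delta_in_PS rmap_in_PS)
  then show ?thesis by (auto simp: Rset_def)
qed

lemma rmap_in_Rset: "z \<in> Rset T M \<Longrightarrow> 0 < alpha T M i y z \<Longrightarrow> rmap T M i y z \<in> Rset T M"
  by (auto simp: Rset_def intro: orbit.step)

lemma delta_in_Rset: "delta x \<in> Rset T M"
  by (auto simp: Rset_def intro: orbit.base)

lemma Rset_sets_PSM: "Rset T M \<in> sets PSM"
  by (rule sets.countable[OF _ countable_Rset]) (use Rset_subset_PS in \<open>auto simp: sets_PSM_iff\<close>)

text \<open>An anchor observation is emitted by a single state, so it resets the filter to a point
  mass; positivity of T bounds its probability away from 0 uniformly on PS.\<close>

lemma anchor_observation: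
  assumes "positive_model T" and "anchored_model T M"
  obtains x y c where "0 < c" "\<And>z. z \<in> PS \<Longrightarrow> c \<le> alpha T M i y z"
    "\<And>z. z \<in> PS \<Longrightarrow> rmap T M i y z = delta x"
proof -
  obtain x y where pos: "0 < M i x y" and only: "\<And>x'. x' \<noteq> x \<Longrightarrow> M i x' y = 0"
    using assms(2) unfolding anchored_model_def by blast
  define c where "c = Min (range (\<lambda>j. T j x)) * M i x y"
  have alpha_eq: "alpha T M i y z = (\<Sum>j\<in>UNIV. z $ j * T j x) * M i x y" for z
  proof -
    have "alpha T M i y z = (\<Sum>j\<in>UNIV. z $ j * T j x * M i x y)"
      unfolding alpha_def using only by (intro sum.cong refl) (simp add: sum.remove[of _ x])
    then show ?thesis by (simp add: sum_distrib_right)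
  qed
  have "0 < c" unfolding c_def using assms(1) pos by (simp add: positive_model_def)
  moreover have c_le: "c \<le> alpha T M i y z" if z: "z \<in> PS" for z
  proof -
    have "Min (range (\<lambda>j. T j x)) = (\<Sum>j\<in>UNIV. z $ j * Min (range (\<lambda>j. T j x)))"
      using z by (simp add: PS_def flip: sum_distrib_right)
    also have "\<dots> \<le> (\<Sum>j\<in>UNIV. z $ j * T j x)"
      using z by (intro sum_mono mult_left_mono) (auto simp: PS_def)
    finally show ?thesis unfolding alpha_eq c_def using pos by (intro mult_right_mono) auto
  qed
  moreover have "rmap T M i y z = delta x" if z: "z \<in> PS" for z
  proof -
    have "0 < alpha T M i y z" using c_le[OF z] \<open>0 < c\<close> by linarith
    moreover have "(\<Sum>j\<in>UNIV. M i x y * T j x * z $ j) = alpha T M i y z"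
      unfolding alpha_eq by (simp add: sum_distrib_left sum_distrib_right mult_ac)
    ultimately show ?thesis
      by (auto simp: vec_eq_iff nth_rmap delta_def only)
  qed
  ultimately show thesis using that by blast
qed

text \<open>Where alpha vanishes, rmap divides by 0 and returns the zero vector; filter_step keeps z
  instead, so that it maps PS into PS. These observations have probability 0.\<close>

definition filter_step :: "'o \<Rightarrow> 'v \<Rightarrow> real^'x \<Rightarrow> real^'x" where
  "filter_step i y z = (if 0 < alpha T M i y z then rmap T M i y z else z)"

lemma filter_step_in_PS: "z \<in> PS \<Longrightarrow> filter_step i y z \<in> PS"
  by (simp add: filter_step_def rmap_in_PS)

lemma filter_step_measurable: "filter_step i y \<in> measurable PSM PSM"
proof -
  have "filter_step i y \<in> measurable PSM borel"
    unfolding filter_step_def[abs_def]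
  proof (rule measurable_If[OF rmap_measurable])
    show "(\<lambda>z. z) \<in> borel_measurable PSM" unfolding PSM_def by (rule measurable_restrict_space1) simp
  qed measurable
  then show ?thesis
    unfolding PSM_def by (rule measurable_restrict_space2[rotated]) (auto simp: filter_step_in_PS)
qed

end

locale hmm_policy = stochastic_hmm T M
  for T :: "'x::finite \<Rightarrow> 'x \<Rightarrow> real" and M :: "'o::finite \<Rightarrow> 'x \<Rightarrow> 'v::finite \<Rightarrow> real" +
  fixes g :: "real^'x \<Rightarrow> 'o"
begin

definition trans_op :: "(real^'x \<Rightarrow> real) \<Rightarrow> real^'x \<Rightarrow> real" where
  "trans_op h z = (\<Sum>y | 0 < alpha T M (g z) y z. alpha T M (g z) y z * h (rmap T M (g z) y z))"

lemma trans_op_mono: "z \<in> PS \<Longrightarrow> (\<And>w. w \<in> PS \<Longrightarrow> h w \<le> h' w) \<Longrightarrow> trans_op h z \<le> trans_op h' z"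
  unfolding trans_op_def by (intro sum_mono mult_left_mono) (auto simp: rmap_in_PS)

lemma trans_op_cong: "z \<in> PS \<Longrightarrow> (\<And>w. w \<in> PS \<Longrightarrow> h w = h' w) \<Longrightarrow> trans_op h z = trans_op h' z"
  unfolding trans_op_def by (intro sum.cong) (auto simp: rmap_in_PS)

lemma trans_op_lincomb: "trans_op (\<lambda>w. a * h w + b * h' w) z = a * trans_op h z + b * trans_op h' z"
  unfolding trans_op_def by (simp add: sum.distrib sum_distrib_left algebra_simps)

lemma trans_op_const: assumes "z \<in> PS" shows "trans_op (\<lambda>_. c) z = c"
proof -
  have "(\<Sum>y | 0 < alpha T M (g z) y z. alpha T M (g z) y z) = (\<Sum>y\<in>UNIV. alpha T M (g z) y z)"
    using alpha_nonneg[OF assms] by (intro sum.mono_neutral_left) (auto simp: less_le)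
  then show ?thesis using sum_alpha[OF assms] by (simp add: trans_op_def flip: sum_distrib_right)
qed

lemma trans_op_eq_sum_filter_step:
  assumes "z \<in> PS"
  shows "trans_op h z = (\<Sum>y\<in>UNIV. alpha T M (g z) y z * h (filter_step (g z) y z))"
proof -
  have "trans_op h z = (\<Sum>y | 0 < alpha T M (g z) y z. alpha T M (g z) y z * h (filter_step (g z) y z))"
    unfolding trans_op_def by (intro sum.cong) (auto simp: filter_step_def)
  also have "\<dots> = (\<Sum>y\<in>UNIV. alpha T M (g z) y z * h (filter_step (g z) y z))"
    using alpha_nonneg[OF assms] by (intro sum.mono_neutral_left) (auto simp: less_le)
  finally show ?thesis .
qed

lemma trans_op_iter_mono:
  "z \<in> PS \<Longrightarrow> (\<And>w. w \<in> PS \<Longrightarrow> h w \<le> h' w) \<Longrightarrow> (trans_op ^^ k) h z \<le> (trans_op ^^ k) h' z"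
  by (induction k arbitrary: z) (auto intro: trans_op_mono)

lemma trans_op_iter_cong:
  "z \<in> PS \<Longrightarrow> (\<And>w. w \<in> PS \<Longrightarrow> h w = h' w) \<Longrightarrow> (trans_op ^^ k) h z = (trans_op ^^ k) h' z"
  by (induction k arbitrary: z) (auto intro: trans_op_cong)

lemma trans_op_iter_lincomb:
  "(trans_op ^^ k) (\<lambda>w. a * h w + b * h' w) = (\<lambda>z. a * (trans_op ^^ k) h z + b * (trans_op ^^ k) h' z)"
  by (induction k) (auto simp: trans_op_lincomb)

lemma trans_op_iter_scale: "(trans_op ^^ k) (\<lambda>w. a * h w) z = a * (trans_op ^^ k) h z"
  using trans_op_iter_lincomb[of k a h 0 h] by (simp add: fun_eq_iff)

lemma trans_op_iter_const: "z \<in> PS \<Longrightarrow> (trans_op ^^ k) (\<lambda>_. c) z = c"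
proof (induction k arbitrary: z)
  case (Suc k)
  have "(trans_op ^^ Suc k) (\<lambda>_. c) z = trans_op ((trans_op ^^ k) (\<lambda>_. c)) z" by simp
  also have "\<dots> = trans_op (\<lambda>_. c) z" using Suc.IH by (rule trans_op_cong[OF Suc.prems])
  finally show ?case using trans_op_const[OF Suc.prems] by simp
qed simp

lemma trans_op_iter_bounds:
  assumes "z \<in> PS" and "\<And>w. w \<in> PS \<Longrightarrow> h w \<in> {lo..hi}"
  shows "(trans_op ^^ k) h z \<in> {lo..hi}"
  using trans_op_iter_mono[of z "\<lambda>_. lo" h k] trans_op_iter_mono[of z h "\<lambda>_. hi" k]
    trans_op_iter_const[of z k] assms by auto

lemma trans_op_iter_abs_le:
  assumes "z \<in> PS" and "\<And>w. w \<in> PS \<Longrightarrow> \<bar>h w\<bar> \<le> B"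
  shows "\<bar>(trans_op ^^ k) h z\<bar> \<le> B"
proof -
  have "- B \<le> (trans_op ^^ k) h z \<and> (trans_op ^^ k) h z \<le> B"
    using trans_op_iter_bounds[OF assms(1), of h "- B" B k] assms(2) by (force simp: abs_le_iff)
  then show ?thesis by (simp add: abs_le_iff)
qed

lemma rpow_eq_trans_op_iter: "rpow T M g k z w = (trans_op ^^ k) (indicator {w}) z"
  by (induction k arbitrary: z) (auto simp: trans_op_def indicator_def)

lemma rpow_nonneg: "0 \<le> rpow T M g k z w"
  by (induction k arbitrary: z) (auto intro!: sum_nonneg)

lemma rpow_le_1: "z \<in> PS \<Longrightarrow> rpow T M g k z w \<le> 1"
  unfolding rpow_eq_trans_op_iter using trans_op_iter_bounds[of z "indicator {w}" 0 1 k] by auto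

lemma rpow_Suc_ge:
  assumes "0 < alpha T M (g z) y z"
  shows "alpha T M (g z) y z * rpow T M g k (rmap T M (g z) y z) w \<le> rpow T M g (Suc k) z w"
  unfolding rpow.simps using assms
  by (intro member_le_sum[where f="\<lambda>y. alpha T M (g z) y z * rpow T M g k (rmap T M (g z) y z) w"])
     (auto intro!: mult_nonneg_nonneg rpow_nonneg)

lemma rpow_add_ge:
  assumes "z \<in> PS"
  shows "rpow T M g m z u * rpow T M g n u w \<le> rpow T M g (m + n) z w"
proof -
  have "(trans_op ^^ m) (\<lambda>v. rpow T M g n u w * indicator {u} v) z = rpow T M g n u w * rpow T M g m z u"
    by (simp only: trans_op_iter_scale rpow_eq_trans_op_iter)
  then have "rpow T M g m z u * rpow T M g n u w = (trans_op ^^ m) (\<lambda>v. rpow T M g n u w * indicator {u} v) z"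
    by (simp add: mult.commute)
  also have "\<dots> \<le> (trans_op ^^ m) ((trans_op ^^ n) (indicator {w})) z"
    using assms by (intro trans_op_iter_mono) (auto simp: indicator_def rpow_eq_trans_op_iter[symmetric] rpow_nonneg)
  also have "\<dots> = rpow T M g (m + n) z w"
    by (simp add: rpow_eq_trans_op_iter funpow_add)
  finally show ?thesis .
qed

lemma rpow_pos_imp_Rset: "z \<in> Rset T M \<Longrightarrow> 0 < rpow T M g k z w \<Longrightarrow> w \<in> Rset T M"
proof (induction k arbitrary: z)
  case (Suc k)
  have "\<exists>y\<in>{y. 0 < alpha T M (g z) y z}. 0 < alpha T M (g z) y z * rpow T M g k (rmap T M (g z) y z) w"
  proof (rule ccontr)
    assume "\<not> ?thesis"
    then have "rpow T M g (Suc k) z w \<le> 0" unfolding rpow.simps by (intro sum_nonpos) (force simp: not_less)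
    with Suc.prems(2) show False by simp
  qed
  then obtain y where "0 < alpha T M (g z) y z" "0 < rpow T M g k (rmap T M (g z) y z) w"
    by (auto simp: zero_less_mult_iff)
  then show ?case using Suc.IH Suc.prems(1) rmap_in_Rset by blast
qed (simp split: if_splits)

fun reach :: "nat \<Rightarrow> real^'x \<Rightarrow> (real^'x) set" where
  "reach 0 z = {z}"
| "reach (Suc k) z = (\<Union>y\<in>{y. 0 < alpha T M (g z) y z}. reach k (rmap T M (g z) y z))"

lemma finite_reach: "finite (reach k z)"
  by (induction k arbitrary: z) auto

lemma rpow_outside_reach: "w \<notin> reach k z \<Longrightarrow> rpow T M g k z w = 0"
  by (induction k arbitrary: z) (auto intro!: sum.neutral)

lemma trans_op_iter_eq_sum_reach:
  "(trans_op ^^ k) h z = (\<Sum>w\<in>reach k z. rpow T M g k z w * h w)"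
proof (induction k arbitrary: z)
  case (Suc k)
  define A a r where "A = {y. 0 < alpha T M (g z) y z}"
    and "a y = alpha T M (g z) y z" and "r y = rmap T M (g z) y z" for y
  have fin: "finite (reach (Suc k) z)" by (rule finite_reach)
  have sub: "reach k (r y) \<subseteq> reach (Suc k) z" if "y \<in> A" for y
    using that by (auto simp: A_def r_def)
  have "(trans_op ^^ Suc k) h z = (\<Sum>y\<in>A. a y * (\<Sum>w\<in>reach k (r y). rpow T M g k (r y) w * h w))"
    by (simp add: trans_op_def A_def a_def r_def Suc.IH)
  also have "\<dots> = (\<Sum>y\<in>A. a y * (\<Sum>w\<in>reach (Suc k) z. rpow T M g k (r y) w * h w))"
    using fin sub rpow_outside_reach by (intro sum.cong refl arg_cong2[where f="(*)"] sum.mono_neutral_left) auto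
  also have "\<dots> = (\<Sum>y\<in>A. \<Sum>w\<in>reach (Suc k) z. a y * rpow T M g k (r y) w * h w)"
    by (simp add: sum_distrib_left mult.assoc)
  also have "\<dots> = (\<Sum>w\<in>reach (Suc k) z. \<Sum>y\<in>A. a y * rpow T M g k (r y) w * h w)"
    by (rule sum.swap)
  also have "\<dots> = (\<Sum>w\<in>reach (Suc k) z. rpow T M g (Suc k) z w * h w)"
    by (simp add: A_def a_def r_def sum_distrib_right)
  finally show ?case .
qed simp

end

section \<open>Doeblin's condition\<close>

context hmm_policy
begin

lemma rpow_return_eventually:
  assumes "restricted_aperiodic T M g" and "b \<in> Rset T M"
  shows "eventually (\<lambda>n. 0 < rpow T M g n b b) sequentially"
proof -
  define S where "S = {k. 0 < k \<and> 0 < rpow T M g k b b}"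
  have "b \<in> PS" using assms(2) Rset_subset_PS by blast
  have "a + c \<in> S" if "a \<in> S" "c \<in> S" for a c
    using that rpow_add_ge[OF \<open>b \<in> PS\<close>, of a b c b] unfolding S_def
    by (auto intro: less_le_trans mult_pos_pos)
  moreover have "Gcd S = 1" using assms unfolding restricted_aperiodic_def S_def by blast
  moreover have "0 \<notin> S" unfolding S_def by simp
  ultimately have "eventually (\<lambda>n. n \<in> S) sequentially" by (rule nat_add_closed_eventually_mem)
  then show ?thesis by (rule eventually_mono) (simp add: S_def)
qed

lemma rpow_pos_eventually:
  assumes "restricted_irreducible T M g" "restricted_aperiodic T M g"
    and "z \<in> Rset T M" "b \<in> Rset T M"
  shows "eventually (\<lambda>n. 0 < rpow T M g n z b) sequentially"
proof -
  obtain k where k: "0 < rpow T M g k z b"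
    using assms(1,3,4) unfolding restricted_irreducible_def by blast
  obtain N where N: "\<And>n. N \<le> n \<Longrightarrow> 0 < rpow T M g n b b"
    using rpow_return_eventually[OF assms(2,4)] unfolding eventually_sequentially by blast
  have "0 < rpow T M g n z b" if "k + N \<le> n" for n
  proof -
    have "0 < rpow T M g k z b * rpow T M g (n - k) b b" using k N that by simp
    also have "\<dots> \<le> rpow T M g (k + (n - k)) z b"
      using assms(3) Rset_subset_PS by (intro rpow_add_ge) blast
    finally show ?thesis using that by simp
  qed
  then show ?thesis unfolding eventually_sequentially by blast
qed

text \<open>From any information state, the anchor observation of the current action leads to a point
  mass, and from each of the finitely many such point masses b is reached with positive
  probability after any large enough number of steps.\<close>

lemma doeblin_minorization:
  assumes "positive_model T" "anchored_model T M"
    and "restricted_irreducible T M g" "restricted_aperiodic T M g" and "b \<in> Rset T M"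
  obtains K eps where "0 < eps" "\<And>z. z \<in> PS \<Longrightarrow> eps \<le> rpow T M g K z b"
proof -
  have "\<exists>x y c. 0 < c \<and> (\<forall>z\<in>PS. c \<le> alpha T M i y z \<and> rmap T M i y z = delta x)" for i
    by (rule anchor_observation[OF assms(1,2), of i]) blast
  then obtain x y c where c_pos: "\<And>i. 0 < c i"
    and anchor: "\<And>i z. z \<in> PS \<Longrightarrow> c i \<le> alpha T M i (y i) z \<and> rmap T M i (y i) z = delta (x i)"
    by metis
  have "eventually (\<lambda>n. \<forall>i. 0 < rpow T M g n (delta (x i)) b) sequentially"
    using rpow_pos_eventually[OF assms(3,4) delta_in_Rset assms(5)] by (intro eventually_all_finite) auto
  then obtain N where N: "\<And>i. 0 < rpow T M g N (delta (x i)) b"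
    unfolding eventually_sequentially by blast
  define eps where "eps = Min (range (\<lambda>i. c i * rpow T M g N (delta (x i)) b))"
  have "0 < eps" unfolding eps_def using c_pos N by simp
  moreover have "eps \<le> rpow T M g (Suc N) z b" if z: "z \<in> PS" for z
  proof -
    let ?i = "g z"
    have "eps \<le> c ?i * rpow T M g N (delta (x ?i)) b" unfolding eps_def by simp
    also have "\<dots> \<le> alpha T M ?i (y ?i) z * rpow T M g N (rmap T M ?i (y ?i) z) b"
      using anchor[OF z] by (auto intro: mult_right_mono rpow_nonneg)
    also have "\<dots> \<le> rpow T M g (Suc N) z b"
      using anchor[OF z, of ?i] c_pos[of ?i] by (intro rpow_Suc_ge) linarith
    finally show ?thesis .
  qed
  ultimately show thesis using that by blast
qed

end

section \<open>Uniform ergodicity under Doeblin's condition\<close>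

locale doeblin_policy = hmm_policy T M g
  for T :: "'x::finite \<Rightarrow> 'x \<Rightarrow> real" and M :: "'o::finite \<Rightarrow> 'x \<Rightarrow> 'v::finite \<Rightarrow> real"
    and g :: "real^'x \<Rightarrow> 'o" +
  fixes ref :: "real^'x" and K :: nat and eps :: real
  assumes ref_in_Rset: "ref \<in> Rset T M"
    and eps_pos: "0 < eps"
    and minorization: "z \<in> PS \<Longrightarrow> eps \<le> rpow T M g K z ref"
begin

lemma ref_in_PS: "ref \<in> PS"
  using ref_in_Rset Rset_subset_PS by blast

lemma eps_le_1: "eps \<le> 1"
  using minorization[OF ref_in_PS] rpow_le_1[OF ref_in_PS] by (rule order_trans)

text \<open>Comparing h with affine functions of the indicator of ref, which K steps of the chain
  hit with probability at least eps, shrinks the range of h by the factor 1 - eps.\<close>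

lemma trans_op_iter_K_band:
  assumes h: "\<And>w. w \<in> PS \<Longrightarrow> h w \<in> {lo..lo + D}" and z: "z \<in> PS"
  shows "(trans_op ^^ K) h z \<in> {lo + eps * (h ref - lo)..lo + eps * (h ref - lo) + (1 - eps) * D}"
proof -
  have href: "lo \<le> h ref" "h ref \<le> lo + D" using h[OF ref_in_PS] by auto
  have affine: "(trans_op ^^ K) (\<lambda>w. a * indicator {ref} w + c * 1) z = a * rpow T M g K z ref + c"
    for a c
    unfolding trans_op_iter_lincomb by (simp add: rpow_eq_trans_op_iter trans_op_iter_const[OF z])
  have "(trans_op ^^ K) (\<lambda>w. (h ref - lo) * indicator {ref} w + lo * 1) z \<le> (trans_op ^^ K) h z"
    using h href by (intro trans_op_iter_mono[OF z]) (auto simp: indicator_def)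
  moreover have "(h ref - lo) * eps \<le> (h ref - lo) * rpow T M g K z ref"
    using href minorization[OF z] by (intro mult_left_mono) auto
  moreover have "(trans_op ^^ K) h z
      \<le> (trans_op ^^ K) (\<lambda>w. (h ref - (lo + D)) * indicator {ref} w + (lo + D) * 1) z"
    using h href by (intro trans_op_iter_mono[OF z]) (auto simp: indicator_def)
  moreover have "(lo + D - h ref) * eps \<le> (lo + D - h ref) * rpow T M g K z ref"
    using href minorization[OF z] by (intro mult_left_mono) auto
  ultimately show ?thesis unfolding affine by (simp add: algebra_simps)
qed

lemma trans_op_iter_band:
  assumes "\<And>w. w \<in> PS \<Longrightarrow> h w \<in> {lo..lo + D}"
  obtains lo' where "\<And>t z. j * K \<le> t \<Longrightarrow> z \<in> PS \<Longrightarrow> (trans_op ^^ t) h z \<in> {lo'..lo' + (1 - eps) ^ j * D}"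
proof -
  have "\<exists>lo'. \<forall>z\<in>PS. (trans_op ^^ (j * K)) h z \<in> {lo'..lo' + (1 - eps) ^ j * D}"
  proof (induction j)
    case 0
    then show ?case using assms by auto
  next
    case (Suc j)
    then obtain lo' where "\<And>z. z \<in> PS \<Longrightarrow> (trans_op ^^ (j * K)) h z \<in> {lo'..lo' + (1 - eps) ^ j * D}"
      by blast
    then have "\<forall>z\<in>PS. (trans_op ^^ K) ((trans_op ^^ (j * K)) h) z \<in>
        {lo' + eps * ((trans_op ^^ (j * K)) h ref - lo')..
         lo' + eps * ((trans_op ^^ (j * K)) h ref - lo') + (1 - eps) * ((1 - eps) ^ j * D)}"
      using trans_op_iter_K_band by blast
    then show ?case by (auto simp: funpow_add mult.commute mult.left_commute)
  qed
  then obtain lo' where lo': "\<And>z. z \<in> PS \<Longrightarrow> (trans_op ^^ (j * K)) h z \<in> {lo'..lo' + (1 - eps) ^ j * D}"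
    by blast
  have "(trans_op ^^ t) h z \<in> {lo'..lo' + (1 - eps) ^ j * D}" if "j * K \<le> t" "z \<in> PS" for t z
  proof -
    have "(trans_op ^^ t) h = (trans_op ^^ (t - j * K)) ((trans_op ^^ (j * K)) h)"
      using that(1) by (metis funpow_add le_add_diff_inverse2 o_apply)
    then show ?thesis using trans_op_iter_bounds[OF that(2) lo'] by simp
  qed
  then show thesis by (rule that)
qed

lemma geometric_below:
  assumes "0 < r" shows "\<exists>j. (1 - eps) ^ j * C < r"
proof -
  have "(\<lambda>j. (1 - eps) ^ j * C) \<longlonglongrightarrow> 0 * C"
    using eps_pos eps_le_1 by (intro tendsto_mult_right LIMSEQ_power_zero) auto
  then have "eventually (\<lambda>j. (1 - eps) ^ j * C < r) sequentially"
    using assms by (intro order_tendstoD(2)) auto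
  then show ?thesis by (auto simp: eventually_sequentially)
qed

definition asymp_mean :: "(real^'x \<Rightarrow> real) \<Rightarrow> real" where
  "asymp_mean h = lim (\<lambda>t. (trans_op ^^ t) h ref)"

lemma trans_op_iter_near_asymp_mean:
  assumes B: "\<And>w. w \<in> PS \<Longrightarrow> \<bar>h w\<bar> \<le> B" and "z \<in> PS" and "j * K \<le> t"
  shows "\<bar>(trans_op ^^ t) h z - asymp_mean h\<bar> \<le> (1 - eps) ^ j * (2 * B)"
proof -
  have band: "\<And>w. w \<in> PS \<Longrightarrow> h w \<in> {- B..- B + 2 * B}"
    using B by (force simp: abs_le_iff)
  have band_iter: "\<exists>lo. \<forall>t z. i * K \<le> t \<longrightarrow> z \<in> PS \<longrightarrow>
      (trans_op ^^ t) h z \<in> {lo..lo + (1 - eps) ^ i * (2 * B)}" for i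
    using trans_op_iter_band[where h=h and lo="- B" and D="2 * B", OF band] by metis
  let ?X = "\<lambda>t. (trans_op ^^ t) h ref"
  have "Cauchy ?X"
  proof (rule CauchyI)
    fix e :: real assume "0 < e"
    then obtain i where i: "(1 - eps) ^ i * (2 * B) < e" using geometric_below by blast
    obtain lo where lo: "\<And>t z. i * K \<le> t \<Longrightarrow> z \<in> PS \<Longrightarrow> (trans_op ^^ t) h z \<in> {lo..lo + (1 - eps) ^ i * (2 * B)}"
      using band_iter by blast
    have "norm (?X m - ?X n) < e" if "i * K \<le> m" "i * K \<le> n" for m n
      using lo[OF that(1) ref_in_PS] lo[OF that(2) ref_in_PS] i by (simp add: abs_less_iff)
    then show "\<exists>N. \<forall>m\<ge>N. \<forall>n\<ge>N. norm (?X m - ?X n) < e" by blast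
  qed
  then have lim: "?X \<longlonglongrightarrow> asymp_mean h"
    unfolding asymp_mean_def by (simp add: Cauchy_convergent_iff convergent_LIMSEQ_iff)
  obtain lo where lo: "\<And>t z. j * K \<le> t \<Longrightarrow> z \<in> PS \<Longrightarrow> (trans_op ^^ t) h z \<in> {lo..lo + (1 - eps) ^ j * (2 * B)}"
    using band_iter by blast
  have "asymp_mean h \<in> {lo..lo + (1 - eps) ^ j * (2 * B)}"
    using lo[OF _ ref_in_PS]
    by (auto intro!: LIMSEQ_le_const[OF lim] LIMSEQ_le_const2[OF lim] exI[of _ "j * K"])
  then show ?thesis using lo[OF assms(3,2)] by (simp add: abs_le_iff)
qed

lemma trans_op_iter_tendsto_asymp_mean:
  assumes "bounded (h ` PS)" and "z \<in> PS"
  shows "(\<lambda>t. (trans_op ^^ t) h z) \<longlonglongrightarrow> asymp_mean h"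
proof (rule LIMSEQ_I)
  obtain B where B: "\<And>w. w \<in> PS \<Longrightarrow> \<bar>h w\<bar> \<le> B" using assms(1) unfolding bounded_real by blast
  fix r :: real assume "0 < r"
  then obtain j where "(1 - eps) ^ j * (2 * B) < r" using geometric_below by blast
  then show "\<exists>N. \<forall>t\<ge>N. norm ((trans_op ^^ t) h z - asymp_mean h) < r"
    using trans_op_iter_near_asymp_mean[OF B assms(2)] by (intro exI[of _ "j * K"]) (force)
qed

lemma asymp_mean_lincomb:
  assumes "bounded (h ` PS)" "bounded (h' ` PS)"
  shows "asymp_mean (\<lambda>w. a * h w + b * h' w) = a * asymp_mean h + b * asymp_mean h'"
proof -
  have "(\<lambda>t. a * (trans_op ^^ t) h ref + b * (trans_op ^^ t) h' ref) \<longlonglongrightarrow> a * asymp_mean h + b * asymp_mean h'"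
    using assms by (intro tendsto_intros trans_op_iter_tendsto_asymp_mean ref_in_PS)
  then show ?thesis unfolding asymp_mean_def trans_op_iter_lincomb by (rule limI)
qed

lemma asymp_mean_mono:
  assumes "bounded (h ` PS)" "bounded (h' ` PS)" and "\<And>w. w \<in> PS \<Longrightarrow> h w \<le> h' w"
  shows "asymp_mean h \<le> asymp_mean h'"
  using assms by (intro LIMSEQ_le[OF trans_op_iter_tendsto_asymp_mean trans_op_iter_tendsto_asymp_mean])
    (auto intro: ref_in_PS trans_op_iter_mono)

sublocale asymp_mean: positive_linear_functional_on PS asymp_mean
  by unfold_locales (simp_all add: asymp_mean_lincomb asymp_mean_mono)

lemma asymp_mean_const: "asymp_mean (\<lambda>_. c) = c"
  unfolding asymp_mean_def by (simp add: trans_op_iter_const[OF ref_in_PS])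

lemma asymp_mean_cong:
  assumes "\<And>w. w \<in> PS \<Longrightarrow> h w = h' w" shows "asymp_mean h = asymp_mean h'"
proof -
  have "(\<lambda>t. (trans_op ^^ t) h ref) = (\<lambda>t. (trans_op ^^ t) h' ref)"
    by (rule ext, rule trans_op_iter_cong[OF ref_in_PS assms])
  then show ?thesis by (simp add: asymp_mean_def)
qed

lemma asymp_mean_trans_op:
  assumes "bounded (h ` PS)" shows "asymp_mean (trans_op h) = asymp_mean h"
proof -
  have "(\<lambda>t. (trans_op ^^ Suc t) h ref) \<longlonglongrightarrow> asymp_mean h"
    by (rule LIMSEQ_Suc[OF trans_op_iter_tendsto_asymp_mean[OF assms ref_in_PS]])
  then show ?thesis
    unfolding asymp_mean_def by (simp add: funpow_Suc_right limI del: funpow.simps)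
qed

end

section \<open>The stationary distribution\<close>

context doeblin_policy
begin

definition stationary_weight :: "real^'x \<Rightarrow> real" where
  "stationary_weight w = asymp_mean (indicator {w})"

lemma stationary_weight_nonneg: "0 \<le> stationary_weight w"
  using asymp_mean_mono[OF bounded_const_image bounded_indicator_image, of 0 "{w}"]
  by (simp add: stationary_weight_def asymp_mean_const)

lemma stationary_weight_outside_Rset:
  assumes "w \<notin> Rset T M" shows "stationary_weight w = 0"
proof -
  have "(trans_op ^^ t) (indicator {w}) ref = 0" for t
    using rpow_pos_imp_Rset[OF ref_in_Rset, of t w] rpow_nonneg[of t ref w] assms
    by (auto simp: rpow_eq_trans_op_iter less_le)
  then show ?thesis by (simp add: stationary_weight_def asymp_mean_def)
qed

lemma sum_stationary_weight:
  assumes "finite F" shows "(\<Sum>w\<in>F. stationary_weight w) = asymp_mean (indicator F)"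
proof -
  have ind_eq: "indicator F = (\<lambda>z. \<Sum>w\<in>F. indicator {w} z :: real)"
    using assms by (auto simp: indicator_def fun_eq_iff)
  have "asymp_mean (\<lambda>z. \<Sum>w\<in>F. indicator {w} z) = (\<Sum>w\<in>F. asymp_mean (indicator {w}))"
    by (rule asymp_mean.L_sum[OF assms bounded_indicator_image])
  then show ?thesis unfolding stationary_weight_def ind_eq by (rule sym)
qed

lemma sum_stationary_weight_le_1: "finite F \<Longrightarrow> (\<Sum>w\<in>F. stationary_weight w) \<le> 1"
  using asymp_mean_mono[OF bounded_indicator_image bounded_const_image, of F 1]
  by (simp add: sum_stationary_weight asymp_mean_const indicator_def)

lemma sum_stationary_weight_reach_ge:
  "1 - (1 - eps) ^ j * 2 \<le> (\<Sum>w\<in>reach (j * K) ref. stationary_weight w)"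
proof -
  let ?R = "reach (j * K) ref"
  have "(trans_op ^^ (j * K)) (indicator ?R) ref = (trans_op ^^ (j * K)) (\<lambda>_. 1) ref"
    by (simp add: trans_op_iter_eq_sum_reach)
  then have "(trans_op ^^ (j * K)) (indicator ?R) ref = 1" by (simp add: trans_op_iter_const[OF ref_in_PS])
  moreover have "\<bar>(trans_op ^^ (j * K)) (indicator ?R) ref - asymp_mean (indicator ?R)\<bar> \<le> (1 - eps) ^ j * (2 * 1)"
    by (rule trans_op_iter_near_asymp_mean) (auto simp: ref_in_PS indicator_def)
  ultimately show ?thesis by (simp add: sum_stationary_weight finite_reach abs_le_iff)
qed

definition stationary_pmf :: "(real^'x) pmf" where
  "stationary_pmf = embed_pmf stationary_weight"

lemma pmf_stationary_pmf: "pmf stationary_pmf w = stationary_weight w"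
  unfolding stationary_pmf_def
proof (rule pmf_embed_pmf)
  show "(\<integral>\<^sup>+w. ennreal (stationary_weight w) \<partial>count_space UNIV) = 1"
  proof (rule nn_integral_count_space_eq_1)
    fix e :: real assume "0 < e"
    then obtain j where "(1 - eps) ^ j * 2 < e" using geometric_below by blast
    then show "\<exists>F. finite F \<and> 1 - e \<le> sum stationary_weight F"
      using sum_stationary_weight_reach_ge[of j] finite_reach by (intro exI[of _ "reach (j * K) ref"]) auto
  qed (simp_all add: stationary_weight_nonneg sum_stationary_weight_le_1)
qed (rule stationary_weight_nonneg)

lemma set_stationary_pmf: "set_pmf stationary_pmf \<subseteq> Rset T M"
  using stationary_weight_outside_Rset by (auto simp: set_pmf_eq pmf_stationary_pmf)

lemma AE_stationary_pmf_PS: "AE w in stationary_pmf. w \<in> PS"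
  using set_stationary_pmf Rset_subset_PS by (auto simp: AE_measure_pmf_iff)

lemma integrable_stationary_pmf:
  fixes h :: "real^'x \<Rightarrow> real"
  assumes "bounded (h ` PS)" shows "integrable stationary_pmf h"
proof -
  obtain B where "\<And>w. w \<in> PS \<Longrightarrow> \<bar>h w\<bar> \<le> B" using assms unfolding bounded_real by blast
  then show ?thesis
    using AE_stationary_pmf_PS by (intro measure_pmf.integrable_const_bound[where B=B]) auto
qed

lemma asymp_mean_near_stationary_sum:
  assumes "finite F" and "\<And>w. w \<in> PS \<Longrightarrow> \<bar>h w\<bar> \<le> B"
  shows "\<bar>asymp_mean h - (\<Sum>w\<in>F. h w * stationary_weight w)\<bar> \<le> B * (1 - (\<Sum>w\<in>F. stationary_weight w))"
proof -
  have "\<bar>asymp_mean h - (\<Sum>w\<in>F. h w * asymp_mean (indicator {w}))\<bar>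
      \<le> B * (asymp_mean (\<lambda>_. 1) - asymp_mean (indicator F))"
    by (rule asymp_mean.L_finite_approx[OF assms])
  then show ?thesis
    by (simp only: stationary_weight_def[symmetric] asymp_mean_const
        sum_stationary_weight[OF assms(1), symmetric])
qed

lemma integral_stationary_pmf_near_stationary_sum:
  assumes "finite F" and "\<And>w. w \<in> PS \<Longrightarrow> \<bar>h w\<bar> \<le> B"
  shows "\<bar>(\<integral>w. h w \<partial>stationary_pmf) - (\<Sum>w\<in>F. h w * stationary_weight w)\<bar>
    \<le> B * (1 - (\<Sum>w\<in>F. stationary_weight w))"
proof -
  define I :: "(real^'x \<Rightarrow> real) \<Rightarrow> real" where "I f = (\<integral>w. f w \<partial>stationary_pmf)" for f
  interpret I: positive_linear_functional_on PS I
  proof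
    show "I (\<lambda>x. a * f x + b * f' x) = a * I f + b * I f'"
      if "bounded (f ` PS)" "bounded (f' ` PS)" for f f' a b
      using integrable_stationary_pmf[OF that(1)] integrable_stationary_pmf[OF that(2)] by (simp add: I_def)
    show "I f \<le> I f'"
      if "bounded (f ` PS)" "bounded (f' ` PS)" "\<And>x. x \<in> PS \<Longrightarrow> f x \<le> f' x" for f f'
      unfolding I_def using that AE_stationary_pmf_PS
      by (intro integral_mono_AE integrable_stationary_pmf) (auto elim: AE_mp)
  qed
  have I_indicator: "I (indicator S) = (\<Sum>w\<in>S. stationary_weight w)" if "finite S" for S
    using that by (simp add: I_def measure_measure_pmf_finite pmf_stationary_pmf)
  have "\<bar>I h - (\<Sum>w\<in>F. h w * I (indicator {w}))\<bar> \<le> B * (I (\<lambda>_. 1) - I (indicator F))"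
    by (rule I.L_finite_approx[OF assms])
  then show ?thesis
    using I_indicator[of "{_}"] I_indicator[OF assms(1)] by (simp add: I_def)
qed

text \<open>Both sides are positive normalised functionals that agree on points, so they differ at most
  by the mass outside reach (j * K) ref, which tends to 0 as j grows.\<close>

lemma asymp_mean_eq_integral:
  assumes B: "\<And>w. w \<in> PS \<Longrightarrow> \<bar>h w\<bar> \<le> B"
  shows "asymp_mean h = (\<integral>w. h w \<partial>stationary_pmf)"
proof (rule ccontr)
  let ?d = "\<bar>asymp_mean h - (\<integral>w. h w \<partial>stationary_pmf)\<bar>"
  have "0 \<le> B" using B[OF ref_in_PS] by simp
  have d_le: "?d \<le> (1 - eps) ^ j * (4 * B)" for j
  proof -
    let ?F = "reach (j * K) ref"
    have "?d \<le> 2 * B * (1 - (\<Sum>w\<in>?F. stationary_weight w))"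
      using asymp_mean_near_stationary_sum[where h=h, OF finite_reach[of "j * K" ref] B]
        integral_stationary_pmf_near_stationary_sum[where h=h, OF finite_reach[of "j * K" ref] B]
      by (simp add: abs_le_iff)
    also have "\<dots> \<le> 2 * B * ((1 - eps) ^ j * 2)"
      using sum_stationary_weight_reach_ge[of j] \<open>0 \<le> B\<close> by (intro mult_left_mono) auto
    finally show ?thesis by (simp add: algebra_simps)
  qed
  assume "asymp_mean h \<noteq> (\<integral>w. h w \<partial>stationary_pmf)"
  then obtain j where "(1 - eps) ^ j * (4 * B) < ?d" using geometric_below[of ?d] by auto
  with d_le[of j] show False by simp
qed

end

section \<open>The transition function on laws of information states\<close>

lemma space_prob_on_PS: "prob_on_PS \<mu> \<Longrightarrow> space \<mu> = PS"
  unfolding prob_on_PS_def by (metis sets_eq_imp_space_eq space_PSM)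

lemma measurable_prob_on_PS: "prob_on_PS \<mu> \<Longrightarrow> measurable \<mu> N = measurable PSM N"
  unfolding prob_on_PS_def by (intro measurable_cong_sets) auto

locale measurable_policy = hmm_policy T M g
  for T :: "'x::finite \<Rightarrow> 'x \<Rightarrow> real" and M :: "'o::finite \<Rightarrow> 'x \<Rightarrow> 'v::finite \<Rightarrow> real"
    and g :: "real^'x \<Rightarrow> 'o" +
  assumes g_measurable: "g \<in> measurable PSM (count_space UNIV)"
begin

lemma filter_step_policy_measurable: "(\<lambda>z. filter_step (g z) y z) \<in> measurable PSM PSM"
  by (rule measurable_compose_countable'[where f="\<lambda>i z. filter_step i y z",
        OF filter_step_measurable g_measurable]) simp

lemma alpha_policy_measurable: "(\<lambda>z. alpha T M (g z) y z) \<in> borel_measurable PSM"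
  by (rule measurable_compose_countable'[where f="\<lambda>i z. alpha T M i y z",
        OF alpha_measurable g_measurable]) simp

lemma trans_op_measurable:
  assumes "h \<in> borel_measurable PSM" shows "trans_op h \<in> borel_measurable PSM"
proof -
  have "(\<lambda>z. \<Sum>y\<in>UNIV. alpha T M (g z) y z * h (filter_step (g z) y z)) \<in> borel_measurable PSM"
    using measurable_compose[OF filter_step_policy_measurable assms]
    by (intro borel_measurable_sum borel_measurable_times alpha_policy_measurable) (simp add: comp_def)
  then show ?thesis
    by (rule measurable_cong[THEN iffD1, rotated]) (simp add: trans_op_eq_sum_filter_step)
qed

lemma trans_op_iter_measurable: "h \<in> borel_measurable PSM \<Longrightarrow> (trans_op ^^ k) h \<in> borel_measurable PSM"
  by (induction k) (auto intro: trans_op_measurable)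

text \<open>Unlike Ftrans, which is only given by its values on measurable sets, next_law is a measure
  by construction: the law of the filter update when the pair (observation, information state)
  has density alpha with respect to counting measure times the current law.\<close>

definition next_law :: "(real^'x) measure \<Rightarrow> (real^'x) measure" where
  "next_law \<mu> = distr (density (count_space UNIV \<Otimes>\<^sub>M \<mu>) (\<lambda>(y, z). ennreal (alpha T M (g z) y z)))
     PSM (\<lambda>(y, z). filter_step (g z) y z)"

lemma sets_next_law[measurable_cong]: "sets (next_law \<mu>) = sets PSM"
  by (simp add: next_law_def)

lemma space_next_law: "space (next_law \<mu>) = PS"
  by (simp add: next_law_def)

context
  fixes \<mu> :: "(real^'x) measure"
  assumes \<mu>: "prob_on_PS \<mu>"
begin

lemma nn_integral_next_law:
  assumes f: "f \<in> borel_measurable PSM"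
  shows "(\<integral>\<^sup>+w. f w \<partial>next_law \<mu>) =
    (\<integral>\<^sup>+z. (\<Sum>y\<in>UNIV. ennreal (alpha T M (g z) y z) * f (filter_step (g z) y z)) \<partial>\<mu>)"
proof -
  interpret sigma_finite_measure \<mu>
    using \<mu> by (simp add: prob_on_PS_def prob_space_imp_sigma_finite)
  have step: "(\<lambda>(y, z). filter_step (g z) y z) \<in> measurable (count_space UNIV \<Otimes>\<^sub>M \<mu>) PSM"
    by (rule measurable_pair_measure_countable1)
       (auto simp: measurable_prob_on_PS[OF \<mu>] filter_step_policy_measurable)
  have dens: "(\<lambda>(y, z). ennreal (alpha T M (g z) y z)) \<in> borel_measurable (count_space UNIV \<Otimes>\<^sub>M \<mu>)"
    by (rule measurable_pair_measure_countable1)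
       (auto simp: measurable_prob_on_PS[OF \<mu>] intro!: measurable_compose[OF alpha_policy_measurable])
  have f_step: "(\<lambda>p. f ((\<lambda>(y, z). filter_step (g z) y z) p)) \<in> borel_measurable (count_space UNIV \<Otimes>\<^sub>M \<mu>)"
    using measurable_compose[OF step f] by (simp add: comp_def)
  have "(\<integral>\<^sup>+w. f w \<partial>next_law \<mu>) = (\<integral>\<^sup>+p. (\<lambda>(y, z). ennreal (alpha T M (g z) y z)) p *
      f ((\<lambda>(y, z). filter_step (g z) y z) p) \<partial>(count_space UNIV \<Otimes>\<^sub>M \<mu>))"
    unfolding next_law_def using step f dens f_step by (simp add: nn_integral_distr nn_integral_density)
  also have "\<dots> = (\<integral>\<^sup>+y. \<integral>\<^sup>+z. ennreal (alpha T M (g z) y z) * f (filter_step (g z) y z) \<partial>\<mu> \<partial>count_space UNIV)"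
    using nn_integral_fst[OF borel_measurable_times_ennreal[OF dens f_step]] by (simp add: split_beta')
  also have "\<dots> = (\<Sum>y\<in>UNIV. \<integral>\<^sup>+z. ennreal (alpha T M (g z) y z) * f (filter_step (g z) y z) \<partial>\<mu>)"
    by (rule nn_integral_count_space_finite) simp
  also have "\<dots> = (\<integral>\<^sup>+z. (\<Sum>y\<in>UNIV. ennreal (alpha T M (g z) y z) * f (filter_step (g z) y z)) \<partial>\<mu>)"
  proof (rule nn_integral_sum[symmetric])
    fix y :: 'v
    have "(\<lambda>z. f (filter_step (g z) y z)) \<in> borel_measurable PSM"
      using measurable_compose[OF filter_step_policy_measurable f] by (simp add: comp_def)
    then show "(\<lambda>z. ennreal (alpha T M (g z) y z) * f (filter_step (g z) y z)) \<in> borel_measurable \<mu>"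
      unfolding measurable_prob_on_PS[OF \<mu>] using alpha_policy_measurable by measurable
  qed
  finally show ?thesis .
qed

lemma Ftrans_eq_next_law: "Ftrans T M g \<mu> = next_law \<mu>"
proof -
  have "Ftrans T M g \<mu> = measure_of PS (sets PSM) (emeasure (next_law \<mu>))"
    unfolding Ftrans_def
  proof (rule measure_of_eq)
    show "sets PSM \<subseteq> Pow PS" using sets.space_closed[of PSM] by simp
    fix B :: "(real^'x) set" assume "B \<in> sigma_sets PS (sets PSM)"
    then have B: "B \<in> sets PSM" by (metis space_PSM sets.sigma_sets_eq)
    have cell: "g -` {i} \<inter> PS \<in> sets PSM" for i
      using measurable_sets[OF g_measurable, of "{i}"] by simp
    have B_step: "(\<lambda>z. indicator B (filter_step i y z) :: ennreal) \<in> borel_measurable PSM" for i y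
      using B by (intro measurable_compose[OF filter_step_measurable]) simp
    have meas: "(\<lambda>z. ennreal (alpha T M i y z) * indicator B (filter_step i y z) * indicator (g -` {i} \<inter> PS) z)
        \<in> borel_measurable \<mu>" for i y
      unfolding measurable_prob_on_PS[OF \<mu>] using cell B_step by measurable
    have "(\<Sum>i\<in>UNIV. \<Sum>y\<in>UNIV. set_nn_integral \<mu> (g -` {i} \<inter> PS)
          (\<lambda>z. ennreal (alpha T M i y z) * indicator B (rmap T M i y z)))
        = (\<Sum>i\<in>UNIV. \<Sum>y\<in>UNIV. \<integral>\<^sup>+z. ennreal (alpha T M i y z) * indicator B (filter_step i y z)
            * indicator (g -` {i} \<inter> PS) z \<partial>\<mu>)"
      by (intro sum.cong refl nn_integral_cong)
         (auto simp: filter_step_def ennreal_neg split: split_indicator)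
    also have "\<dots> = (\<Sum>i\<in>UNIV. \<integral>\<^sup>+z. (\<Sum>y\<in>UNIV. ennreal (alpha T M i y z) * indicator B (filter_step i y z)
            * indicator (g -` {i} \<inter> PS) z) \<partial>\<mu>)"
      by (intro sum.cong refl nn_integral_sum[symmetric] meas)
    also have "\<dots> = (\<integral>\<^sup>+z. (\<Sum>i\<in>UNIV. \<Sum>y\<in>UNIV. ennreal (alpha T M i y z) * indicator B (filter_step i y z)
            * indicator (g -` {i} \<inter> PS) z) \<partial>\<mu>)"
      by (intro nn_integral_sum[symmetric] borel_measurable_sum meas)
    also have "\<dots> = (\<integral>\<^sup>+z. (\<Sum>y\<in>UNIV. ennreal (alpha T M (g z) y z) * indicator B (filter_step (g z) y z)) \<partial>\<mu>)"
      by (intro nn_integral_cong) (auto simp: space_prob_on_PS[OF \<mu>] indicator_def if_distrib sum.If_cases)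
    also have "\<dots> = (\<integral>\<^sup>+w. indicator B w \<partial>next_law \<mu>)"
      by (rule nn_integral_next_law[symmetric]) (use B in simp)
    also have "\<dots> = emeasure (next_law \<mu>) B"
      using B by (simp add: sets_next_law)
    finally show "(\<Sum>i\<in>UNIV. \<Sum>y\<in>UNIV. set_nn_integral \<mu> (g -` {i} \<inter> PS)
          (\<lambda>z. ennreal (alpha T M i y z) * indicator B (rmap T M i y z))) = emeasure (next_law \<mu>) B" .
  qed
  also have "\<dots> = next_law \<mu>"
    by (metis measure_of_of_measure sets_next_law space_next_law)
  finally show ?thesis .
qed

lemma prob_on_PS_Ftrans: "prob_on_PS (Ftrans T M g \<mu>)"
proof -
  have "emeasure (next_law \<mu>) PS = (\<integral>\<^sup>+z. (\<Sum>y\<in>UNIV. ennreal (alpha T M (g z) y z) * 1) \<partial>\<mu>)"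
    using nn_integral_next_law[of "\<lambda>_. 1"] by (simp add: space_next_law)
  also have "\<dots> = (\<integral>\<^sup>+z. 1 \<partial>\<mu>)"
  proof (rule nn_integral_cong)
    fix z assume "z \<in> space \<mu>"
    then have "z \<in> PS" by (simp add: space_prob_on_PS[OF \<mu>])
    then show "(\<Sum>y\<in>UNIV. ennreal (alpha T M (g z) y z) * 1) = 1"
      using alpha_nonneg sum_alpha by simp
  qed
  also have "\<dots> = 1" using \<mu> by (simp add: prob_on_PS_def prob_space.emeasure_space_1)
  finally have "prob_space (next_law \<mu>)" by (intro prob_spaceI) (simp add: space_next_law)
  then show ?thesis by (simp add: prob_on_PS_def Ftrans_eq_next_law sets_next_law)
qed

lemma integral_Ftrans:
  assumes h: "h \<in> borel_measurable PSM" and B: "\<And>z. z \<in> PS \<Longrightarrow> \<bar>h z\<bar> \<le> B"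
  shows "(\<integral>w. h w \<partial>Ftrans T M g \<mu>) = (\<integral>z. trans_op h z \<partial>\<mu>)"
proof -
  have hB: "0 \<le> h w + B" if "w \<in> PS" for w using B[OF that] by simp
  have "(\<integral>w. h w \<partial>Ftrans T M g \<mu>) = enn2real (\<integral>\<^sup>+w. ennreal (h w + B) \<partial>next_law \<mu>) - B"
    using prob_on_PS_Ftrans h B unfolding Ftrans_eq_next_law
    by (intro integral_eq_nn_integral_shift) (auto simp: prob_on_PS_def space_next_law)
  also have "(\<integral>\<^sup>+w. ennreal (h w + B) \<partial>next_law \<mu>) = (\<integral>\<^sup>+z. ennreal (trans_op h z + B) \<partial>\<mu>)"
  proof -
    have "(\<Sum>y\<in>UNIV. ennreal (alpha T M (g z) y z) * ennreal (h (filter_step (g z) y z) + B))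
        = ennreal (trans_op h z + B)" if z: "z \<in> PS" for z
    proof -
      have "(\<Sum>y\<in>UNIV. alpha T M (g z) y z * (h (filter_step (g z) y z) + B)) = trans_op h z + B"
        using sum_alpha[OF z] by (simp add: trans_op_eq_sum_filter_step[OF z] algebra_simps sum.distrib
            flip: sum_distrib_left)
      then show ?thesis
        using alpha_nonneg[OF z] hB[OF filter_step_in_PS[OF z]]
        by (simp add: ennreal_mult[symmetric] sum_ennreal)
    qed
    then have "(\<integral>\<^sup>+z. (\<Sum>y\<in>UNIV. ennreal (alpha T M (g z) y z) * ennreal (h (filter_step (g z) y z) + B)) \<partial>\<mu>)
        = (\<integral>\<^sup>+z. ennreal (trans_op h z + B) \<partial>\<mu>)"
      by (intro nn_integral_cong) (simp add: space_prob_on_PS[OF \<mu>])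
    moreover have "(\<lambda>w. ennreal (h w + B)) \<in> borel_measurable PSM" using h by measurable
    ultimately show ?thesis by (simp add: nn_integral_next_law)
  qed
  also have "enn2real (\<integral>\<^sup>+z. ennreal (trans_op h z + B) \<partial>\<mu>) - B = (\<integral>z. trans_op h z \<partial>\<mu>)"
    using \<mu> trans_op_measurable[OF h] trans_op_iter_abs_le[of _ h B 1] B
    by (intro integral_eq_nn_integral_shift[symmetric])
       (auto simp: prob_on_PS_def measurable_prob_on_PS[OF \<mu>] space_prob_on_PS[OF \<mu>])
  finally show ?thesis .
qed

end

lemma prob_on_PS_Ftrans_iter: "prob_on_PS \<mu> \<Longrightarrow> prob_on_PS ((Ftrans T M g ^^ t) \<mu>)"
  by (induction t) (auto intro: prob_on_PS_Ftrans)

lemma integral_Ftrans_iter: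
  assumes "prob_on_PS \<mu>" and "h \<in> borel_measurable PSM" and "\<And>z. z \<in> PS \<Longrightarrow> \<bar>h z\<bar> \<le> B"
  shows "(\<integral>z. h z \<partial>(Ftrans T M g ^^ t) \<mu>) = (\<integral>z. (trans_op ^^ t) h z \<partial>\<mu>)"
  using assms(2,3)
proof (induction t arbitrary: h)
  case (Suc t)
  have "(\<integral>z. h z \<partial>(Ftrans T M g ^^ Suc t) \<mu>) = (\<integral>z. trans_op h z \<partial>(Ftrans T M g ^^ t) \<mu>)"
    using integral_Ftrans[OF prob_on_PS_Ftrans_iter[OF assms(1)] Suc.prems] by simp
  also have "\<dots> = (\<integral>z. (trans_op ^^ t) (trans_op h) z \<partial>\<mu>)"
    using trans_op_iter_abs_le[of _ h B 1] Suc.prems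
    by (intro Suc.IH trans_op_measurable) auto
  finally show ?case by (simp add: funpow_Suc_right del: funpow.simps)
qed simp

end

section \<open>Convergence of the law of the information state\<close>

locale measurable_doeblin_policy =
  doeblin_policy T M g ref K eps + measurable_policy T M g
  for T :: "'x::finite \<Rightarrow> 'x \<Rightarrow> real" and M :: "'o::finite \<Rightarrow> 'x \<Rightarrow> 'v::finite \<Rightarrow> real"
    and g :: "real^'x \<Rightarrow> 'o" and ref :: "real^'x" and K :: nat and eps :: real
begin

text \<open>The value ref outside PS is irrelevant, since stationary_pmf lives on Rset, a subset of PS;
  it only makes the map land in the space of PSM.\<close>

definition stationary_measure :: "(real^'x) measure" where
  "stationary_measure = distr (measure_pmf stationary_pmf) PSM (\<lambda>z. if z \<in> PS then z else ref)"

lemma into_PS_measurable: "(\<lambda>z. if z \<in> PS then z else ref) \<in> measurable (measure_pmf stationary_pmf) PSM"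
  using ref_in_PS by simp

lemma prob_on_PS_stationary_measure: "prob_on_PS stationary_measure"
  unfolding prob_on_PS_def stationary_measure_def
  using measure_pmf.prob_space_distr[OF into_PS_measurable] by simp

lemma integral_stationary_measure:
  assumes "h \<in> borel_measurable PSM" and B: "\<And>z. z \<in> PS \<Longrightarrow> \<bar>h z\<bar> \<le> B"
  shows "(\<integral>z. h z \<partial>stationary_measure) = asymp_mean h"
proof -
  have "(\<integral>z. h z \<partial>stationary_measure) = (\<integral>z. h (if z \<in> PS then z else ref) \<partial>stationary_pmf)"
    unfolding stationary_measure_def by (rule integral_distr[OF into_PS_measurable assms(1)])
  also have "\<dots> = asymp_mean (\<lambda>z. h (if z \<in> PS then z else ref))"
    using B ref_in_PS by (intro asymp_mean_eq_integral[symmetric]) auto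
  also have "\<dots> = asymp_mean h" by (rule asymp_mean_cong) simp
  finally show ?thesis .
qed

lemma emeasure_stationary_measure_Rset: "emeasure stationary_measure (Rset T M) = 1"
proof -
  have "emeasure stationary_measure (Rset T M) =
      emeasure stationary_pmf ((\<lambda>z. if z \<in> PS then z else ref) -` Rset T M)"
    unfolding stationary_measure_def by (simp add: emeasure_distr[OF into_PS_measurable Rset_sets_PSM])
  also have "\<dots> = 1"
    using set_stationary_pmf Rset_subset_PS
    by (intro measure_pmf.emeasure_eq_1_AE) (auto simp: AE_measure_pmf_iff)
  finally show ?thesis .
qed

lemma Ftrans_stationary_measure: "Ftrans T M g stationary_measure = stationary_measure"
proof (rule measure_eqI)
  have P: "prob_on_PS (Ftrans T M g stationary_measure)"
    by (rule prob_on_PS_Ftrans[OF prob_on_PS_stationary_measure])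
  then show sets_eq: "sets (Ftrans T M g stationary_measure) = sets stationary_measure"
    using prob_on_PS_stationary_measure by (simp add: prob_on_PS_def)
  fix A assume "A \<in> sets (Ftrans T M g stationary_measure)"
  then have A: "A \<in> sets PSM" using P by (simp add: prob_on_PS_def)
  have ind_bound: "\<bar>indicator A z :: real\<bar> \<le> 1" for z by (simp add: indicator_def)
  have "measure (Ftrans T M g stationary_measure) A = (\<integral>z. indicator A z \<partial>Ftrans T M g stationary_measure)"
    using A P by (simp add: prob_on_PS_def)
  also have "\<dots> = (\<integral>z. trans_op (indicator A) z \<partial>stationary_measure)"
    using A by (intro integral_Ftrans[OF prob_on_PS_stationary_measure]) (auto simp: ind_bound)
  also have "\<dots> = asymp_mean (trans_op (indicator A))"
    using A trans_op_iter_abs_le[of _ "indicator A" 1 1]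
    by (intro integral_stationary_measure[where B=1] trans_op_measurable) (auto simp: ind_bound)
  also have "\<dots> = asymp_mean (indicator A)"
    by (rule asymp_mean_trans_op[OF bounded_indicator_image])
  also have "\<dots> = (\<integral>z. indicator A z \<partial>stationary_measure)"
    using A by (intro integral_stationary_measure[symmetric]) (auto simp: ind_bound)
  also have "\<dots> = measure stationary_measure A"
    using A prob_on_PS_stationary_measure by (simp add: prob_on_PS_def)
  finally show "emeasure (Ftrans T M g stationary_measure) A = emeasure stationary_measure A"
    using P prob_on_PS_stationary_measure
    by (simp add: prob_on_PS_def finite_measure.emeasure_eq_measure[OF prob_space.axioms(1)])
qed

lemma weak_conv_stationary_measure:
  assumes \<mu>0: "prob_on_PS \<mu>0"
  shows "weak_conv_PS (\<lambda>t. (Ftrans T M g ^^ t) \<mu>0) stationary_measure"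
  unfolding weak_conv_PS_def
proof (intro allI impI)
  fix f :: "real^'x \<Rightarrow> real" assume "continuous_on PS f"
  then obtain B where B: "\<And>z. z \<in> PS \<Longrightarrow> \<bar>f z\<bar> \<le> B"
    using compact_PS by (metis bounded_real compact_continuous_image compact_imp_bounded imageI)
  have f: "f \<in> borel_measurable PSM"
    unfolding PSM_def by (rule borel_measurable_continuous_on_restrict) fact
  interpret prob_space \<mu>0 using \<mu>0 by (simp add: prob_on_PS_def)
  have "(\<lambda>t. \<integral>z. (trans_op ^^ t) f z \<partial>\<mu>0) \<longlonglongrightarrow> (\<integral>z. asymp_mean f \<partial>\<mu>0)"
  proof (rule integral_dominated_convergence[where w="\<lambda>_. B"])
    show "AE z in \<mu>0. (\<lambda>t. (trans_op ^^ t) f z) \<longlonglongrightarrow> asymp_mean f"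
      using B by (intro AE_I2 trans_op_iter_tendsto_asymp_mean)
        (auto simp: space_prob_on_PS[OF \<mu>0] bounded_real)
    show "AE z in \<mu>0. norm ((trans_op ^^ t) f z) \<le> B" for t
      using B by (intro AE_I2) (auto simp: space_prob_on_PS[OF \<mu>0] trans_op_iter_abs_le)
    show "(trans_op ^^ t) f \<in> borel_measurable \<mu>0" for t
      using trans_op_iter_measurable[OF f] by (simp add: measurable_prob_on_PS[OF \<mu>0])
  qed simp_all
  then show "(\<lambda>t. \<integral>z. f z \<partial>(Ftrans T M g ^^ t) \<mu>0) \<longlonglongrightarrow> (\<integral>z. f z \<partial>stationary_measure)"
    using integral_Ftrans_iter[OF \<mu>0 f B] integral_stationary_measure[OF f B] by (simp add: prob_space)
qed

end

theorem theorem2p24: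
  fixes T :: "'x::finite \<Rightarrow> 'x \<Rightarrow> real"
    and M :: "'o::finite \<Rightarrow> 'x \<Rightarrow> 'v::finite \<Rightarrow> real"
    and g :: "real^'x \<Rightarrow> 'o"
  assumes "stochastic_model T M"
    and "positive_model T"
    and "anchored_model T M"
    and "g \<in> measurable PSM (count_space UNIV)"
    and "restricted_irreducible T M g"
    and "restricted_aperiodic T M g"
  shows "\<exists>\<mu>inf. prob_on_PS \<mu>inf \<and> emeasure \<mu>inf (Rset T M) = 1 \<and>
           Ftrans T M g \<mu>inf = \<mu>inf \<and>
           (\<forall>\<mu>0. prob_on_PS \<mu>0 \<longrightarrow> weak_conv_PS (\<lambda>t. (Ftrans T M g ^^ t) \<mu>0) \<mu>inf)"
proof -
  interpret measurable_policy T M g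
    using assms(1,4) by unfold_locales
  obtain K eps where "0 < eps" "\<And>z. z \<in> PS \<Longrightarrow> eps \<le> rpow T M g K z (delta undefined)"
    using doeblin_minorization[OF assms(2,3,5,6) delta_in_Rset[of undefined]] by blast
  then interpret measurable_doeblin_policy T M g "delta undefined" K eps
    by unfold_locales (auto simp: delta_in_Rset)
  show ?thesis
    using prob_on_PS_stationary_measure emeasure_stationary_measure_Rset
      Ftrans_stationary_measure weak_conv_stationary_measure by blast
qed

end
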